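(* Let $K\ge1$, $N\ge1$, $\sigma>0$ and define the parabolic $r$-prior $$p_r(r\mid\sigma)=\frac{K}{r\sqrt\pi}\left(\frac{Nr^2}{2\sigma^2}\right)^{K/2}U\!\left(\frac{K+1}{2};\frac12;\frac{Nr^2}{2\sigma^2}\right),\qquad r>0.$$ Then for $1-K<\mathrm{Re}\,s<2$, $$\int_0^\infty p_r(r\mid\sigma)\,r^{s-1}\,dr=\left(\frac{\sigma}{\sqrt{2N}}\right)^{s-1}\frac{\Gamma(1-s/2)\,\Gamma(K+s-1)}{\sqrt\pi\,\Gamma(K)}.$$ In particular (taking $s=1$) $p_r(\cdot\mid\sigma)$ is a probability density.
   Context: $U(\alpha;\beta;x)=\frac1{\Gamma(\alpha)}\int_0^\infty e^{-xt}t^{\alpha-1}(1+t)^{\beta-\alpha-1}dt$ is Tricomi's confluent hypergeometric function. *)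

theory Defs
  imports "HOL-Analysis.Analysis"
begin

text \<open>Tricomi's confluent hypergeometric function via its integral representation
  (real arguments; meaningful for a > 0, x > 0).\<close>
definition tricomiU :: "real \<Rightarrow> real \<Rightarrow> real \<Rightarrow> real" where
  "tricomiU a b x = (1 / Gamma a) *
     (LINT t:{0<..}|lborel. exp (- x * t) * t powr (a - 1) * (1 + t) powr (b - a - 1))"

definition parabolic_prior :: "nat \<Rightarrow> nat \<Rightarrow> real \<Rightarrow> real \<Rightarrow> real" where
  "parabolic_prior K N \<sigma> r =
     real K / (r * sqrt pi) * (real N * r^2 / (2 * \<sigma>^2)) powr (real K / 2) *
     tricomiU ((real K + 1) / 2) (1 / 2) (real N * r^2 / (2 * \<sigma>^2))"

end

theory Submission
  imports Defs
begin

text \<open>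
  The prior is p(r) = K/(r\<surd>\<pi>) x^(K/2) U((K+1)/2, 1/2, x) with x = c r^2 and
  c = N/(2\<sigma>^2).  The substitution x = c r^2 turns its Mellin transform at s into
  a constant multiple of the Mellin transform of U at w = (K+s-1)/2.  Since U(a,b,x)
  is, up to 1/\<Gamma>(a), the Laplace transform of t^(a-1) (1+t)^(b-a-1), Fubini turns
  that Mellin transform into \<Gamma>(w) times a beta integral, and a beta integral is
  itself a Mellin transform of a Laplace transform of v^(m-1) e^(-v).  Legendre's
  duplication formula then simplifies the resulting Gamma quotient.
\<close>

lemma cpow_of_real_pos:
  "x > 0 \<Longrightarrow> complex_of_real x powr w = exp (w * of_real (ln x))"
  by (simp add: powr_def Ln_of_real)

lemma cpow_of_real_mult:
  "x \<ge> 0 \<Longrightarrow> y \<ge> 0 \<Longrightarrow> (complex_of_real x * of_real y) powr w = of_real x powr w * of_real y powr w"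
  by (simp add: powr_times_real)

lemma not_nonpos_Int_of_Re_pos: "Re (z::complex) > 0 \<Longrightarrow> z \<notin> \<int>\<^sub>\<le>\<^sub>0"
  by (auto elim!: nonpos_Ints_cases)

text \<open>Hence \<Gamma> does not vanish there (in the library, \<Gamma> is 0 exactly at its poles).\<close>
lemma Gamma_nonzero_of_Re_pos: "Re (z::complex) > 0 \<Longrightarrow> Gamma z \<noteq> 0"
  by (simp add: Gamma_eq_zero_iff not_nonpos_Int_of_Re_pos)

text \<open>For Borel measurable integrands, Lebesgue integrability with respect to lborel
  coincides with absolute Henstock-Kurzweil integrability; this lets us use the
  change-of-variables theorem of the gauge integral.\<close>
lemma set_integrable_lborel_iff_absolutely_integrable:
  fixes f :: "real \<Rightarrow> 'b::euclidean_space"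
  assumes "(\<lambda>x. indicator S x *\<^sub>R f x) \<in> borel_measurable borel"
  shows "set_integrable lborel S f \<longleftrightarrow> f absolutely_integrable_on S"
  using assms unfolding set_integrable_def by (simp add: integrable_completion)

lemma set_integrable_complex_of_real_iff:
  "set_integrable M A (\<lambda>x. complex_of_real (f x)) \<longleftrightarrow> set_integrable M A f"
  unfolding set_integrable_def
  by (simp add: scaleR_conv_of_real complex_of_real_integrable_eq flip: of_real_mult)

lemma power_map_bij:
  fixes c :: real and n :: nat
  assumes c: "c > 0" and n: "n > 0"
  shows "bij_betw (\<lambda>r. c * r ^ n) {0<..} {0<..}"
  unfolding bij_betw_def
proof
  show "inj_on (\<lambda>r. c * r ^ n) {0<..}"
    using c n by (auto simp: inj_on_def power_eq_iff_eq_base)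
  show "(\<lambda>r. c * r ^ n) ` {0<..} = {0<..}"
  proof
    show "(\<lambda>r. c * r ^ n) ` {0<..} \<subseteq> {0<..}" using c by auto
    show "{0<..} \<subseteq> (\<lambda>r. c * r ^ n) ` {0<..}"
    proof
      fix x :: real assume "x \<in> {0<..}"
      hence "root n (x / c) \<in> {0<..}" "c * root n (x / c) ^ n = x"
        using c n by auto
      thus "x \<in> (\<lambda>r. c * r ^ n) ` {0<..}" by (metis image_eqI)
    qed
  qed
qed

lemma borel_measurable_power_substitution:
  fixes f :: "real \<Rightarrow> 'a::euclidean_space" and c :: real and n :: nat
  assumes c: "c > 0" and f: "(\<lambda>x. indicator {0<..} x *\<^sub>R f x) \<in> borel_measurable borel"
  shows "(\<lambda>r. indicator {0<..} r *\<^sub>R ((real n * c * r ^ (n - 1)) *\<^sub>R f (c * r ^ n)))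
           \<in> borel_measurable borel"
proof -
  have eq: "(\<lambda>r. indicator {0<..} r *\<^sub>R ((real n * c * r ^ (n - 1)) *\<^sub>R f (c * r ^ n)))
        = (\<lambda>r. (indicator {0<..} r * (real n * c * r ^ (n - 1)))
                *\<^sub>R (indicator {0<..} (c * r ^ n) *\<^sub>R f (c * r ^ n)))"
    using c by (auto simp: fun_eq_iff indicator_def)
  have "(\<lambda>r. indicator {0<..} r * (real n * c * r ^ (n - 1)) :: real) \<in> borel_measurable borel"
    by measurable
  moreover have "(\<lambda>r. indicator {0<..} (c * r ^ n) *\<^sub>R f (c * r ^ n)) \<in> borel_measurable borel"
    using measurable_compose[OF _ f, of "\<lambda>r. c * r ^ n" borel] by simp
  ultimately show ?thesis
    unfolding eq by (rule borel_measurable_scaleR)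
qed

lemma set_integral_power_substitution:
  fixes f :: "real \<Rightarrow> 'a::euclidean_space" and c :: real and n :: nat
  assumes c: "c > 0" and n: "n > 0" and f: "set_integrable lborel {0<..} f"
  shows "set_integrable lborel {0<..} (\<lambda>r. (real n * c * r ^ (n - 1)) *\<^sub>R f (c * r ^ n))"
    and "(LINT r:{0<..}|lborel. (real n * c * r ^ (n - 1)) *\<^sub>R f (c * r ^ n))
           = (LINT x:{0<..}|lborel. f x)"
proof -
  define g where "g = (\<lambda>r::real. c * r ^ n)"
  define g' where "g' = (\<lambda>r::real. real n * c * r ^ (n - 1))"
  have deriv: "(g has_field_derivative g' r) (at r within {0<..})" for r
    unfolding g_def g'_def by (auto intro!: derivative_eq_intros)
  have bij: "inj_on g {0<..}" "g ` {0<..} = {0<..}"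
    using power_map_bij[OF c n] unfolding g_def bij_betw_def by auto
  have f_meas: "(\<lambda>x. indicator {0<..} x *\<^sub>R f x) \<in> borel_measurable borel"
    using borel_measurable_integrable[OF f[unfolded set_integrable_def]] by simp
  have f_abs: "f absolutely_integrable_on {0<..}"
    using f set_integrable_lborel_iff_absolutely_integrable[OF f_meas] by simp
  have cov_abs: "(\<lambda>r. \<bar>g' r\<bar> *\<^sub>R f (g r)) absolutely_integrable_on {0<..} \<and>
        integral {0<..} (\<lambda>r. \<bar>g' r\<bar> *\<^sub>R f (g r)) = (LINT x:{0<..}|lborel. f x)"
    using has_absolute_integral_change_of_variables_real[OF _ deriv bij(1), of f] f_abs
      set_borel_integral_eq_integral(2)[OF f]
    unfolding bij(2) by simp
  have g'_abs: "\<bar>g' r\<bar> *\<^sub>R f (g r) = g' r *\<^sub>R f (g r)" if "r \<in> {0<..}" for r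
    using that c by (simp add: g'_def)
  have cov: "(\<lambda>r. g' r *\<^sub>R f (g r)) absolutely_integrable_on {0<..}"
    "integral {0<..} (\<lambda>r. g' r *\<^sub>R f (g r)) = (LINT x:{0<..}|lborel. f x)"
  proof -
    have "(\<lambda>r. \<bar>g' r\<bar> *\<^sub>R f (g r)) absolutely_integrable_on {0<..}
          \<longleftrightarrow> (\<lambda>r. g' r *\<^sub>R f (g r)) absolutely_integrable_on {0<..}"
      by (rule set_integrable_cong) (use g'_abs in auto)
    moreover have "integral {0<..} (\<lambda>r. \<bar>g' r\<bar> *\<^sub>R f (g r)) = integral {0<..} (\<lambda>r. g' r *\<^sub>R f (g r))"
      by (rule integral_cong) (use g'_abs in auto)
    ultimately show "(\<lambda>r. g' r *\<^sub>R f (g r)) absolutely_integrable_on {0<..}"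
      "integral {0<..} (\<lambda>r. g' r *\<^sub>R f (g r)) = (LINT x:{0<..}|lborel. f x)"
      using cov_abs by auto
  qed
  have int: "set_integrable lborel {0<..} (\<lambda>r. g' r *\<^sub>R f (g r))"
    using set_integrable_lborel_iff_absolutely_integrable[OF
            borel_measurable_power_substitution[OF c f_meas, of n]] cov(1)
    unfolding g_def g'_def by simp
  thus "set_integrable lborel {0<..} (\<lambda>r. (real n * c * r ^ (n - 1)) *\<^sub>R f (c * r ^ n))"
    by (simp add: g_def g'_def)
  show "(LINT r:{0<..}|lborel. (real n * c * r ^ (n - 1)) *\<^sub>R f (c * r ^ n))
           = (LINT x:{0<..}|lborel. f x)"
    using set_borel_integral_eq_integral(2)[OF int] cov(2) by (simp add: g_def g'_def)
qed

lemma Gamma_integral_lborel: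
  fixes z :: complex
  assumes z: "Re z > 0"
  shows "set_integrable lborel {0<..} (\<lambda>u. complex_of_real u powr (z - 1) / of_real (exp u))"
    and "(LINT u:{0<..}|lborel. complex_of_real u powr (z - 1) / of_real (exp u)) = Gamma z"
proof -
  have "(\<lambda>u. indicator {0<..} u *\<^sub>R (complex_of_real u powr (z - 1) / of_real (exp u)))
        \<in> borel_measurable borel"
    by (rule borel_measurable_continuous_on_indicator)
       (auto intro!: continuous_intros simp: complex_nonpos_Reals_iff)
  thus int: "set_integrable lborel {0<..} (\<lambda>u. complex_of_real u powr (z - 1) / of_real (exp u))"
    using absolutely_integrable_Gamma_integral'[OF z]
    by (simp add: set_integrable_lborel_iff_absolutely_integrable)
  show "(LINT u:{0<..}|lborel. complex_of_real u powr (z - 1) / of_real (exp u)) = Gamma z"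
    using set_borel_integral_eq_integral(2)[OF int] Gamma_integral_complex'[OF z]
    by (simp add: integral_unique)
qed

lemma mellin_exp:
  fixes z :: complex and y :: real
  assumes z: "Re z > 0" and y: "y > 0"
  shows "set_integrable lborel {0<..} (\<lambda>x. complex_of_real x powr (z - 1) * of_real (exp (- x * y)))"
    and "(LINT x:{0<..}|lborel. complex_of_real x powr (z - 1) * of_real (exp (- x * y)))
           = of_real y powr (- z) * Gamma z"
proof -
  define G where "G = (\<lambda>u. complex_of_real u powr (z - 1) / of_real (exp u))"
  note G_int = Gamma_integral_lborel(1)[OF z, folded G_def]
  note G_val = Gamma_integral_lborel(2)[OF z, folded G_def]
  have pointwise: "complex_of_real x powr (z - 1) * of_real (exp (- x * y))
                   = of_real y powr (- z) * (y *\<^sub>R G (y * x))"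
    if "x \<in> {0<..}" for x
  proof -
    have x: "x > 0" using that by simp
    have y_pow: "of_real y * of_real y powr (z - 1) = complex_of_real y powr z"
      using powr_add[of "complex_of_real y" 1 "z - 1"] y by simp
    have "y *\<^sub>R G (y * x)
          = of_real y * (of_real y powr (z - 1) * of_real x powr (z - 1)) * of_real (exp (- x * y))"
      using x y by (simp add: G_def scaleR_conv_of_real cpow_of_real_mult exp_minus field_simps)
    also have "\<dots> = of_real y powr z * (of_real x powr (z - 1) * of_real (exp (- x * y)))"
      by (simp add: y_pow[symmetric] mult_ac)
    finally have scaled: "y *\<^sub>R G (y * x)
        = of_real y powr z * (of_real x powr (z - 1) * of_real (exp (- x * y)))" .
    have "of_real y powr (- z) * complex_of_real y powr z = 1"
      using y by (simp add: powr_minus)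
    thus ?thesis
      unfolding scaled by (simp add: mult.assoc[symmetric])
  qed
  have G_scaled: "set_integrable lborel {0<..} (\<lambda>x. y *\<^sub>R G (y * x))"
      "(LINT x:{0<..}|lborel. y *\<^sub>R G (y * x)) = Gamma z"
    using set_integral_power_substitution[where n = 1, OF y _ G_int] G_val by simp_all
  have "set_integrable lborel {0<..} (\<lambda>x. of_real y powr (- z) * (y *\<^sub>R G (y * x)))"
    using G_scaled(1) by (rule set_integrable_mult_right)
  thus "set_integrable lborel {0<..} (\<lambda>x. complex_of_real x powr (z - 1) * of_real (exp (- x * y)))"
    using pointwise by (subst set_integrable_cong[OF refl refl]) auto
  have "(LINT x:{0<..}|lborel. complex_of_real x powr (z - 1) * of_real (exp (- x * y)))
        = (LINT x:{0<..}|lborel. of_real y powr (- z) * (y *\<^sub>R G (y * x)))"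
    using pointwise by (intro set_lebesgue_integral_cong) auto
  also have "\<dots> = of_real y powr (- z) * Gamma z"
    by (subst set_integral_mult_right) (use G_scaled(2) in simp)
  finally show "(LINT x:{0<..}|lborel. complex_of_real x powr (z - 1) * of_real (exp (- x * y)))
           = of_real y powr (- z) * Gamma z" .
qed

lemma mellin_exp_real:
  fixes r y :: real
  assumes r: "r > 0" and y: "y > 0"
  shows "set_integrable lborel {0<..} (\<lambda>x. x powr (r - 1) * exp (- x * y))"
    and "(LINT x:{0<..}|lborel. x powr (r - 1) * exp (- x * y)) = y powr (- r) * Gamma r"
proof -
  have eq: "complex_of_real x powr (of_real r - 1) * of_real (exp (- x * y))
            = complex_of_real (x powr (r - 1) * exp (- x * y))" if "x \<in> {0<..}" for x
    using that powr_of_real[of x "r - 1"] by simp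
  have "set_integrable lborel {0<..} (\<lambda>x. complex_of_real (x powr (r - 1) * exp (- x * y)))"
    using mellin_exp(1)[of "of_real r" y] r y eq by (subst set_integrable_cong[OF refl refl]) auto
  moreover have "(LINT x:{0<..}|lborel. complex_of_real (x powr (r - 1) * exp (- x * y)))
                 = complex_of_real (y powr (- r) * Gamma r)"
  proof -
    have "(LINT x:{0<..}|lborel. complex_of_real (x powr (r - 1) * exp (- x * y)))
          = (LINT x:{0<..}|lborel. complex_of_real x powr (of_real r - 1) * of_real (exp (- x * y)))"
      using eq by (intro set_lebesgue_integral_cong) auto
    also have "\<dots> = of_real y powr (- of_real r) * Gamma (of_real r)"
      using mellin_exp(2)[of "of_real r" y] r y by simp
    finally show ?thesis
      using y by (simp add: Gamma_complex_of_real powr_of_real[symmetric])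
  qed
  ultimately show "set_integrable lborel {0<..} (\<lambda>x. x powr (r - 1) * exp (- x * y))"
    and "(LINT x:{0<..}|lborel. x powr (r - 1) * exp (- x * y)) = y powr (- r) * Gamma r"
    by (simp_all only: set_integrable_complex_of_real_iff set_integral_complex_of_real of_real_eq_iff)
qed

text \<open>The integrand (y,x) \<mapsto> x^(z-1) e^(-xy) h(y) on the open quadrant, used to swap
  a Mellin transform in x with a Laplace transform in y.\<close>
definition mellin_laplace_kernel :: "complex \<Rightarrow> (real \<Rightarrow> real) \<Rightarrow> real \<Rightarrow> real \<Rightarrow> complex" where
  "mellin_laplace_kernel z h y x =
     indicator ({0<..} \<times> {0<..}) (y, x) *\<^sub>R (complex_of_real x powr (z - 1) * of_real (exp (- x * y) * h y))"

lemma mellin_laplace_kernel_measurable: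
  assumes h_cont: "continuous_on {0<..} h"
  shows "case_prod (mellin_laplace_kernel z h) \<in> borel_measurable (lborel \<Otimes>\<^sub>M lborel)"
proof -
  have "(\<lambda>p. indicator ({0<..} \<times> {0<..}) p *\<^sub>R
          (complex_of_real (snd p) powr (z - 1) * of_real (exp (- snd p * fst p) * h (fst p))))
        \<in> borel_measurable borel"
  proof (rule borel_measurable_continuous_on_indicator)
    have "continuous_on ({0<..} \<times> {0<..}) (\<lambda>p::real \<times> real. h (fst p))"
      by (rule continuous_on_compose2[OF h_cont]) (auto intro!: continuous_intros)
    thus "continuous_on ({0<..} \<times> {0<..}) (\<lambda>p::real \<times> real.
            complex_of_real (snd p) powr (z - 1) * of_real (exp (- snd p * fst p) * h (fst p)))"
      by (auto intro!: continuous_intros simp: complex_nonpos_Reals_iff)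
  qed (auto intro!: borel_open open_Times)
  thus ?thesis
    unfolding lborel_prod mellin_laplace_kernel_def by (simp add: case_prod_beta')
qed

lemma mellin_laplace_kernel_x_section:
  assumes z: "Re z > 0"
  shows "integrable lborel (mellin_laplace_kernel z h y)"
    and "(\<integral>x. mellin_laplace_kernel z h y x \<partial>lborel)
           = indicator {0<..} y *\<^sub>R (Gamma z * (complex_of_real y powr (- z) * of_real (h y)))"
proof -
  have slice: "mellin_laplace_kernel z h y = (\<lambda>x. of_real (indicator {0<..} y * h y) *
                   (indicator {0<..} x *\<^sub>R (complex_of_real x powr (z - 1) * of_real (exp (- x * y)))))"
    by (auto simp: mellin_laplace_kernel_def indicator_def fun_eq_iff)
  show "integrable lborel (mellin_laplace_kernel z h y)"
  proof (cases "y > 0")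
    case True
    show ?thesis
      unfolding slice using mellin_exp(1)[OF z True] unfolding set_integrable_def
      by (rule Bochner_Integration.integrable_mult_right)
  qed (simp add: slice)
  show "(\<integral>x. mellin_laplace_kernel z h y x \<partial>lborel)
           = indicator {0<..} y *\<^sub>R (Gamma z * (complex_of_real y powr (- z) * of_real (h y)))"
  proof (cases "y > 0")
    case True
    have "(\<integral>x. mellin_laplace_kernel z h y x \<partial>lborel) = of_real (h y) * (of_real y powr (- z) * Gamma z)"
      unfolding slice using True mellin_exp(2)[OF z True]
      by (simp only: integral_mult_right_zero set_lebesgue_integral_def) simp
    thus ?thesis using True by (simp add: mult_ac)
  qed (simp add: slice)
qed

lemma mellin_laplace_kernel_y_section:
  "(\<integral>y. mellin_laplace_kernel z h y x \<partial>lborel)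
     = indicator {0<..} x *\<^sub>R (complex_of_real x powr (z - 1) *
         of_real (LINT y:{0<..}|lborel. exp (- x * y) * h y))"
proof (cases "x > 0")
  case True
  have "(\<integral>y. mellin_laplace_kernel z h y x \<partial>lborel) = (\<integral>y. complex_of_real x powr (z - 1) *
           of_real (indicator {0<..} y *\<^sub>R (exp (- x * y) * h y)) \<partial>lborel)"
    using True by (intro Bochner_Integration.integral_cong) (auto simp: mellin_laplace_kernel_def indicator_def)
  also have "\<dots> = complex_of_real x powr (z - 1) * of_real (LINT y:{0<..}|lborel. exp (- x * y) * h y)"
    by (simp only: integral_mult_right_zero integral_complex_of_real set_lebesgue_integral_def)
  finally show ?thesis using True by simp
qed (simp add: mellin_laplace_kernel_def)

text \<open>The kernel is integrable on the quadrant: its inner x-integral of the norm is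
  \<Gamma>(Re z) y^(-Re z) h(y), which is integrable by hypothesis.\<close>
lemma mellin_laplace_kernel_integrable:
  fixes z :: complex and h :: "real \<Rightarrow> real"
  assumes z: "Re z > 0" and h_cont: "continuous_on {0<..} h" and h_nonneg: "\<And>y. y > 0 \<Longrightarrow> h y \<ge> 0"
    and h_int: "set_integrable lborel {0<..} (\<lambda>y. y powr (- Re z) * h y)"
  shows "integrable (lborel \<Otimes>\<^sub>M lborel) (case_prod (mellin_laplace_kernel z h))"
proof (rule lborel_pair.Fubini_integrable)
  show "case_prod (mellin_laplace_kernel z h) \<in> borel_measurable (lborel \<Otimes>\<^sub>M lborel)"
    using h_cont by (rule mellin_laplace_kernel_measurable)
  have norm_section: "(\<integral>x. norm (mellin_laplace_kernel z h y x) \<partial>lborel)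
        = indicator {0<..} y * (Gamma (Re z) * (y powr (- Re z) * h y))" for y
  proof (cases "y > 0")
    case True
    have "(\<integral>x. norm (mellin_laplace_kernel z h y x) \<partial>lborel)
          = (\<integral>x. h y * (indicator {0<..} x *\<^sub>R (x powr (Re z - 1) * exp (- x * y))) \<partial>lborel)"
      using True h_nonneg[OF True]
      by (intro Bochner_Integration.integral_cong)
         (auto simp: mellin_laplace_kernel_def indicator_def norm_mult norm_powr_real_powr abs_mult)
    also have "\<dots> = h y * (y powr (- Re z) * Gamma (Re z))"
      using mellin_exp_real(2)[OF z True] by (simp add: set_lebesgue_integral_def)
    finally show ?thesis using True by simp
  qed (simp add: mellin_laplace_kernel_def)
  show "integrable lborel (\<lambda>y. \<integral>x. norm (case_prod (mellin_laplace_kernel z h) (y, x)) \<partial>lborel)"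
    using set_integrable_mult_right[OF h_int, of "Gamma (Re z)"]
    by (simp add: norm_section set_integrable_def)
  show "AE y in lborel. integrable lborel (\<lambda>x. case_prod (mellin_laplace_kernel z h) (y, x))"
    using mellin_laplace_kernel_x_section(1)[OF z] by simp
qed

lemma mellin_laplace:
  fixes z :: complex and h :: "real \<Rightarrow> real"
  assumes z: "Re z > 0" and h_cont: "continuous_on {0<..} h" and h_nonneg: "\<And>y. y > 0 \<Longrightarrow> h y \<ge> 0"
    and h_int: "set_integrable lborel {0<..} (\<lambda>y. y powr (- Re z) * h y)"
  shows "set_integrable lborel {0<..} (\<lambda>x. complex_of_real x powr (z - 1) *
            of_real (LINT y:{0<..}|lborel. exp (- x * y) * h y))"
    and "(LINT x:{0<..}|lborel. complex_of_real x powr (z - 1) *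
            of_real (LINT y:{0<..}|lborel. exp (- x * y) * h y))
         = Gamma z * (LINT y:{0<..}|lborel. complex_of_real y powr (- z) * of_real (h y))"
proof -
  let ?Q = "mellin_laplace_kernel z h"
  have int: "integrable (lborel \<Otimes>\<^sub>M lborel) (case_prod ?Q)"
    using mellin_laplace_kernel_integrable[OF assms] .
  have "integrable lborel (\<lambda>x. \<integral>y. ?Q y x \<partial>lborel)"
    by (rule lborel_pair.integrable_snd[OF int])
  thus "set_integrable lborel {0<..} (\<lambda>x. complex_of_real x powr (z - 1) *
            of_real (LINT y:{0<..}|lborel. exp (- x * y) * h y))"
    unfolding mellin_laplace_kernel_y_section set_integrable_def .
  have "(\<integral>x. (\<integral>y. ?Q y x \<partial>lborel) \<partial>lborel) = (\<integral>y. (\<integral>x. ?Q y x \<partial>lborel) \<partial>lborel)"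
    by (rule lborel_pair.Fubini_integral[OF int])
  thus "(LINT x:{0<..}|lborel. complex_of_real x powr (z - 1) *
            of_real (LINT y:{0<..}|lborel. exp (- x * y) * h y))
         = Gamma z * (LINT y:{0<..}|lborel. complex_of_real y powr (- z) * of_real (h y))"
    unfolding mellin_laplace_kernel_y_section mellin_laplace_kernel_x_section(2)[OF z]
      set_lebesgue_integral_def by (simp add: scaleR_conv_of_real mult_ac)
qed

lemma laplace_gamma_density:
  fixes m t :: real
  assumes m: "m > 0" and t: "t > -1"
  shows "(LINT v:{0<..}|lborel. exp (- t * v) * (v powr (m - 1) * exp (- v))) = Gamma m * (1 + t) powr (- m)"
proof -
  have "(LINT v:{0<..}|lborel. exp (- t * v) * (v powr (m - 1) * exp (- v)))
        = (LINT v:{0<..}|lborel. v powr (m - 1) * exp (- v * (1 + t)))"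
    by (rule set_lebesgue_integral_cong) (auto simp: algebra_simps simp flip: exp_add)
  also have "\<dots> = Gamma m * (1 + t) powr (- m)"
    using m t mellin_exp_real(2)[of m "1 + t"] by simp
  finally show ?thesis .
qed

text \<open>The beta integral of the second kind,
  \<integral> t^(\<beta>-1) (1+t)^(-m) dt = \<Gamma>(\<beta>) \<Gamma>(m-\<beta>) / \<Gamma>(m) for 0 < Re \<beta> < m,
  obtained as the Mellin transform of the Laplace transform of h(v) = v^(m-1) e^(-v).\<close>
lemma beta_integral:
  fixes m :: real and \<beta> :: complex
  assumes m: "m > 0" and \<beta>_pos: "Re \<beta> > 0" and \<beta>_lt: "Re \<beta> < m"
  shows "set_integrable lborel {0<..} (\<lambda>t. complex_of_real t powr (\<beta> - 1) * of_real ((1 + t) powr (- m)))"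
    and "(LINT t:{0<..}|lborel. complex_of_real t powr (\<beta> - 1) * of_real ((1 + t) powr (- m)))
           = Gamma \<beta> * Gamma (of_real m - \<beta>) / of_real (Gamma m)"
proof -
  define h where "h = (\<lambda>v::real. v powr (m - 1) * exp (- v))"
  have h_cont: "continuous_on {0<..} h"
    unfolding h_def by (auto intro!: continuous_intros)
  have h_nonneg: "\<And>y. y > 0 \<Longrightarrow> h y \<ge> 0"
    by (simp add: h_def)
  have "set_integrable lborel {0<..} (\<lambda>y. y powr ((m - Re \<beta>) - 1) * exp (- y * 1))"
    using \<beta>_lt by (intro mellin_exp_real(1)) auto
  hence h_int: "set_integrable lborel {0<..} (\<lambda>y. y powr (- Re \<beta>) * h y)"
    by (rule set_integrable_cong[THEN iffD1, rotated 3])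
       (auto simp: h_def powr_add[symmetric] mult.assoc diff_diff_eq add.commute)
  have mellin_h: "complex_of_real y powr (- \<beta>) * of_real (h y)
                = complex_of_real y powr ((of_real m - \<beta>) - 1) * of_real (exp (- y * 1))"
    if "y \<in> {0<..}" for y
    using that by (simp add: h_def powr_of_real[symmetric] powr_add[symmetric] mult.assoc diff_diff_eq add.commute)
  note transform = mellin_laplace[OF \<beta>_pos h_cont h_nonneg h_int]
  have G_m: "complex_of_real (Gamma m) \<noteq> 0"
    using Gamma_real_pos[OF m] by simp
  have integrand: "complex_of_real t powr (\<beta> - 1) * of_real (LINT v:{0<..}|lborel. exp (- t * v) * h v)
        = of_real (Gamma m) * (complex_of_real t powr (\<beta> - 1) * of_real ((1 + t) powr (- m)))"
    if "t \<in> {0<..}" for t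
    using laplace_gamma_density[OF m, of t] that by (simp add: h_def mult_ac)
  have "set_integrable lborel {0<..}
          (\<lambda>t. of_real (Gamma m) * (complex_of_real t powr (\<beta> - 1) * of_real ((1 + t) powr (- m))))"
    using transform(1) by (rule set_integrable_cong[THEN iffD1, rotated 3]) (use integrand in auto)
  thus "set_integrable lborel {0<..} (\<lambda>t. complex_of_real t powr (\<beta> - 1) * of_real ((1 + t) powr (- m)))"
    using G_m by simp
  have "of_real (Gamma m) * (LINT t:{0<..}|lborel. complex_of_real t powr (\<beta> - 1) * of_real ((1 + t) powr (- m)))
        = (LINT t:{0<..}|lborel. complex_of_real t powr (\<beta> - 1) *
             of_real (LINT v:{0<..}|lborel. exp (- t * v) * h v))"
    by (subst set_integral_mult_right[symmetric], rule set_lebesgue_integral_cong)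
       (use integrand in auto)
  also have "\<dots> = Gamma \<beta> * (LINT y:{0<..}|lborel. complex_of_real y powr ((of_real m - \<beta>) - 1) * of_real (exp (- y * 1)))"
    using transform(2) mellin_h by (simp add: set_lebesgue_integral_cong)
  also have "\<dots> = Gamma \<beta> * Gamma (of_real m - \<beta>)"
    using mellin_exp(2)[of "of_real m - \<beta>" 1] \<beta>_lt by simp
  finally show "(LINT t:{0<..}|lborel. complex_of_real t powr (\<beta> - 1) * of_real ((1 + t) powr (- m)))
           = Gamma \<beta> * Gamma (of_real m - \<beta>) / of_real (Gamma m)"
    using G_m by (simp add: field_simps)
qed

lemma beta_integrable_real:
  fixes m \<beta> :: real
  assumes "m > 0" "\<beta> > 0" "\<beta> < m"
  shows "set_integrable lborel {0<..} (\<lambda>t. t powr (\<beta> - 1) * (1 + t) powr (- m))"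
proof -
  have eq: "complex_of_real t powr (of_real \<beta> - 1) * of_real ((1 + t) powr (- m))
            = complex_of_real (t powr (\<beta> - 1) * (1 + t) powr (- m))" if "t \<in> {0<..}" for t
    using that by (simp add: powr_of_real[symmetric])
  have "set_integrable lborel {0<..} (\<lambda>t. complex_of_real t powr (of_real \<beta> - 1) * of_real ((1 + t) powr (- m)))"
    using assms by (intro beta_integral(1)) auto
  hence "set_integrable lborel {0<..} (\<lambda>t. complex_of_real (t powr (\<beta> - 1) * (1 + t) powr (- m)))"
    by (rule set_integrable_cong[THEN iffD1, rotated 3]) (use eq in auto)
  thus ?thesis
    by (simp only: set_integrable_complex_of_real_iff)
qed

lemma tricomiU_nonneg:
  assumes "a > 0"
  shows "tricomiU a b x \<ge> 0"
proof -
  have "(LINT t:{0<..}|lborel. exp (- x * t) * t powr (a - 1) * (1 + t) powr (b - a - 1)) \<ge> 0"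
    unfolding set_lebesgue_integral_def
    by (rule Bochner_Integration.integral_nonneg) (auto simp: indicator_def)
  thus ?thesis
    using Gamma_real_pos[OF assms] by (simp add: tricomiU_def)
qed

text \<open>Mellin transform of the Laplace transform of h(t) = t^(a-1) (1+t)^(-m): by the
  Mellin-Laplace interchange it is \<Gamma>(w) times a beta integral, so for
  max(0, a-m) < Re w < a it equals \<Gamma>(w) \<Gamma>(a-w) \<Gamma>(m-a+w) / \<Gamma>(m).\<close>
lemma mellin_laplace_beta_kernel:
  fixes a m :: real and w :: complex
  assumes w_pos: "Re w > 0" and w_lt: "Re w < a" and w_gt: "Re w > a - m"
  defines "h \<equiv> \<lambda>t::real. t powr (a - 1) * (1 + t) powr (- m)"
  shows "set_integrable lborel {0<..} (\<lambda>x. complex_of_real x powr (w - 1) *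
            of_real (LINT t:{0<..}|lborel. exp (- x * t) * h t))"
    and "(LINT x:{0<..}|lborel. complex_of_real x powr (w - 1) *
            of_real (LINT t:{0<..}|lborel. exp (- x * t) * h t))
           = Gamma w * Gamma (of_real a - w) * Gamma (of_real m - of_real a + w) / of_real (Gamma m)"
proof -
  have m: "m > 0" using w_pos w_gt w_lt by simp
  have h_cont: "continuous_on {0<..} h"
    unfolding h_def by (auto intro!: continuous_intros)
  have h_nonneg: "\<And>y. y > 0 \<Longrightarrow> h y \<ge> 0"
    by (simp add: h_def)
  have h_int: "set_integrable lborel {0<..} (\<lambda>y. y powr (- Re w) * h y)"
  proof -
    have "(a - Re w) - 1 = - Re w + (a - 1)" by simp
    hence "y powr (- Re w) * h y = y powr ((a - Re w) - 1) * (1 + y) powr (- m)" for y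
      by (simp only: powr_add) (simp add: h_def mult.assoc)
    thus ?thesis
      using beta_integrable_real[OF m, of "a - Re w"] w_lt w_gt by simp
  qed
  have beta_form: "complex_of_real y powr (- w) * of_real (h y)
                   = complex_of_real y powr ((of_real a - w) - 1) * of_real ((1 + y) powr (- m))"
    if "y \<in> {0<..}" for y
  proof -
    have "(of_real a - w) - 1 = - w + (of_real a - 1)" by simp
    thus ?thesis
      using that by (simp only: powr_add) (simp add: h_def powr_of_real[symmetric] mult.assoc)
  qed
  note transform = mellin_laplace[OF w_pos h_cont h_nonneg h_int]
  show "set_integrable lborel {0<..} (\<lambda>x. complex_of_real x powr (w - 1) *
            of_real (LINT t:{0<..}|lborel. exp (- x * t) * h t))"
    using transform(1) .
  have "(LINT y:{0<..}|lborel. complex_of_real y powr - w * of_real (h y))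
        = (LINT y:{0<..}|lborel. complex_of_real y powr ((of_real a - w) - 1) * of_real ((1 + y) powr (- m)))"
    using beta_form by (simp add: set_lebesgue_integral_cong)
  also have "\<dots> = Gamma (of_real a - w) * Gamma (of_real m - of_real a + w) / of_real (Gamma m)"
    using m w_lt w_gt by (subst beta_integral(2)) (auto simp: algebra_simps)
  finally show "(LINT x:{0<..}|lborel. complex_of_real x powr (w - 1) *
            of_real (LINT t:{0<..}|lborel. exp (- x * t) * h t))
           = Gamma w * Gamma (of_real a - w) * Gamma (of_real m - of_real a + w) / of_real (Gamma m)"
    by (simp only: transform(2) times_divide_eq_right mult.assoc)
qed

lemma mellin_tricomiU:
  fixes a b :: real and w :: complex
  assumes w_pos: "Re w > 0" and w_lt: "Re w < a" and w_gt: "Re w > b - 1"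
  shows "set_integrable lborel {0<..} (\<lambda>x. complex_of_real x powr (w - 1) * of_real (tricomiU a b x))"
    and "(LINT x:{0<..}|lborel. complex_of_real x powr (w - 1) * of_real (tricomiU a b x))
           = Gamma w * Gamma (of_real a - w) * Gamma (w - of_real b + 1)
               / (of_real (Gamma a) * of_real (Gamma (a - b + 1)))"
proof -
  note kernel = mellin_laplace_beta_kernel[of w a "a - b + 1"]
  have conds: "Re w > 0" "Re w < a" "Re w > a - (a - b + 1)"
    using w_pos w_lt w_gt by simp_all
  have integrand: "complex_of_real x powr (w - 1) * of_real (tricomiU a b x)
        = of_real (1 / Gamma a) * (complex_of_real x powr (w - 1) *
            of_real (LINT t:{0<..}|lborel. exp (- x * t) * (t powr (a - 1) * (1 + t) powr (- (a - b + 1)))))"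
    for x by (simp add: tricomiU_def mult.assoc)
  show "set_integrable lborel {0<..} (\<lambda>x. complex_of_real x powr (w - 1) * of_real (tricomiU a b x))"
    unfolding integrand using kernel(1)[OF conds] by (rule set_integrable_mult_right)
  show "(LINT x:{0<..}|lborel. complex_of_real x powr (w - 1) * of_real (tricomiU a b x))
           = Gamma w * Gamma (of_real a - w) * Gamma (w - of_real b + 1)
               / (of_real (Gamma a) * of_real (Gamma (a - b + 1)))"
    unfolding integrand set_integral_mult_right kernel(2)[OF conds]
    by (simp add: algebra_simps)
qed

text \<open>A quotient form of Legendre's duplication formula, in which the factors \<surd>\<pi> cancel.\<close>
lemma Gamma_duplication_ratio:
  fixes u v :: complex
  assumes u: "Re u > 0" and v: "Re v > 0"
  shows "Gamma u * Gamma (u + 1/2) / (Gamma v * Gamma (v + 1/2))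
         = exp ((2 * v - 2 * u) * of_real (ln 2)) * Gamma (2 * u) / Gamma (2 * v)"
proof -
  have dup: "Gamma z * Gamma (z + 1/2) = exp ((1 - 2*z) * of_real (ln 2)) * of_real (sqrt pi) * Gamma (2*z)"
    if "Re z > 0" for z :: complex
    using that by (intro Gamma_legendre_duplication not_nonpos_Int_of_Re_pos) auto
  have "Gamma (2 * v) \<noteq> 0"
    using v by (intro Gamma_nonzero_of_Re_pos) simp
  moreover have "exp ((1 - 2 * v) * of_real (ln 2)) * exp ((2 * v - 2 * u) * of_real (ln 2))
                 = exp ((1 - 2 * u) * complex_of_real (ln 2))"
    by (simp add: exp_add[symmetric] algebra_simps)
  ultimately show ?thesis
    unfolding dup[OF u] dup[OF v] by (simp add: field_simps)
qed

lemma cpow_half_scaling: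
  fixes c :: real and s :: complex
  assumes c: "c > 0"
  shows "complex_of_real c powr ((1 - s) / 2) * exp ((1 - s) * of_real (ln 2))
         = complex_of_real (1 / (2 * sqrt c)) powr (s - 1)"
proof -
  have ln_scale: "complex_of_real (ln (1 / (2 * sqrt c))) = - (of_real (ln 2) + of_real (ln c) / 2)"
    using c by (simp add: ln_div ln_mult ln_sqrt)
  have "complex_of_real c powr ((1 - s) / 2) * exp ((1 - s) * of_real (ln 2))
        = exp ((1 - s) / 2 * of_real (ln c) + (1 - s) * of_real (ln 2))"
    using c by (simp add: cpow_of_real_pos exp_add)
  also have "(1 - s) / 2 * of_real (ln c) + (1 - s) * of_real (ln 2) = (s - 1) * of_real (ln (1 / (2 * sqrt c)))"
    unfolding ln_scale by (simp add: field_simps)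
  also have "exp \<dots> = complex_of_real (1 / (2 * sqrt c)) powr (s - 1)"
    using c by (intro cpow_of_real_pos[symmetric]) simp
  finally show ?thesis .
qed

text \<open>Pointwise shape of the Mellin integrand of the prior: with x = c r^2 and
  w = (K+s-1)/2, the function K/(r\<surd>\<pi>) x^(K/2) u r^(s-1) equals a constant times the
  Jacobian 2cr times x^(w-1) u.\<close>
lemma prior_shape_identity:
  fixes K :: nat and c r u :: real and s :: complex
  assumes c: "c > 0" and r: "r > 0"
  shows "complex_of_real (real K / (r * sqrt pi) * (c * r^2) powr (real K / 2) * u) * of_real r powr (s - 1)
         = (of_nat K / (2 * of_real (sqrt pi)) * of_real c powr ((1 - s) / 2))
           * ((real 2 * c * r ^ (2 - 1)) *\<^sub>R
                (of_real (c * r^2) powr ((of_nat K + s - 1) / 2 - 1) * of_real u))"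
proof -
  define L where "L = ln r"
  define lc where "lc = ln c"
  define Q where "Q = complex_of_real (real K / sqrt pi * u)"
  have r_exp: "r = exp L" using r by (simp add: L_def)
  have c_exp: "c = exp lc" using c by (simp add: lc_def)
  have ln_x: "ln (c * r^2) = lc + 2 * L" using c r by (simp add: L_def lc_def ln_mult ln_realpow)
  have LHS: "complex_of_real (real K / (r * sqrt pi) * (c * r^2) powr (real K / 2) * u) * of_real r powr (s - 1)
             = Q * exp (- of_real L + of_real (real K / 2 * (lc + 2 * L)) + (s - 1) * of_real L)"
  proof -
    have "(c * r^2) powr (real K / 2) = exp (real K / 2 * (lc + 2 * L))"
      using c r ln_x by (simp add: powr_def)
    moreover have "of_real r powr (s - 1) = exp ((s - 1) * of_real L)"
      using r by (simp add: cpow_of_real_pos L_def)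
    ultimately show ?thesis
      unfolding Q_def exp_add by (subst (1) r_exp) (simp add: exp_minus field_simps flip: exp_of_real)
  qed
  have RHS: "(of_nat K / (2 * of_real (sqrt pi)) * of_real c powr ((1 - s) / 2))
           * ((real 2 * c * r ^ (2 - 1)) *\<^sub>R (of_real (c * r^2) powr ((of_nat K + s - 1) / 2 - 1) * of_real u))
           = Q * exp ((1 - s) / 2 * of_real lc + of_real lc + of_real L
                      + ((of_nat K + s - 1) / 2 - 1) * of_real (lc + 2 * L))"
  proof -
    have "of_real (c * r^2) powr ((of_nat K + s - 1) / 2 - 1)
          = exp (((of_nat K + s - 1) / 2 - 1) * of_real (lc + 2 * L))"
      using c r by (subst cpow_of_real_pos) (auto simp: ln_x)
    moreover have "of_real c powr ((1 - s) / 2) = exp ((1 - s) / 2 * of_real lc)"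
      using c by (simp add: cpow_of_real_pos lc_def)
    moreover have "complex_of_real c * of_real r = exp (of_real L) * exp (of_real lc)"
      by (subst c_exp, subst r_exp) (simp add: exp_of_real mult.commute)
    ultimately show ?thesis
      unfolding Q_def exp_add by (simp add: scaleR_conv_of_real field_simps flip: exp_of_real)
  qed
  have exponent: "- of_real L + of_real (real K / 2 * (lc + 2 * L)) + (s - 1) * of_real L
        = (1 - s) / 2 * of_real lc + of_real lc + of_real L + ((of_nat K + s - 1) / 2 - 1) * of_real (lc + 2 * L)"
    by (simp add: field_simps)
  show ?thesis
    unfolding LHS RHS exponent ..
qed

text \<open>The Gamma quotient produced by the Mellin transform of U((K+1)/2, 1/2, \<cdot>) at
  w = (K+s-1)/2, simplified by the duplication formula.\<close>
lemma parabolic_gamma_ratio: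
  fixes K :: nat and s :: complex
  assumes K: "K \<ge> 1" and s: "1 - real K < Re s"
  defines "a \<equiv> (of_nat K + 1) / (2::complex)" and "w \<equiv> (of_nat K + s - 1) / 2"
  shows "Gamma w * Gamma (w + 1/2) / (Gamma a * Gamma (a + 1/2))
         = 2 * exp ((1 - s) * of_real (ln 2)) * Gamma (of_nat K + s - 1) / (of_nat K * Gamma (of_nat K))"
proof -
  have w_pos: "Re w > 0" using s by (simp add: w_def)
  have a_pos: "Re a > 0" by (simp add: a_def)
  have "Gamma w * Gamma (w + 1/2) / (Gamma a * Gamma (a + 1/2))
        = exp ((2 * a - 2 * w) * of_real (ln 2)) * Gamma (2 * w) / Gamma (2 * a)"
    by (rule Gamma_duplication_ratio[OF w_pos a_pos])
  also have "2 * a - 2 * w = 2 - s" by (simp add: a_def w_def field_simps)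
  also have "2 * w = of_nat K + s - 1" by (simp add: w_def)
  also have "2 * a = of_nat K + 1" by (simp add: a_def)
  also have "Gamma (of_nat K + 1 :: complex) = of_nat K * Gamma (of_nat K)"
    using K by (intro Gamma_plus1 not_nonpos_Int_of_Re_pos) simp
  also have "exp ((2 - s) * complex_of_real (ln 2)) = 2 * exp ((1 - s) * of_real (ln 2))"
  proof -
    have "(2 - s) * complex_of_real (ln 2) = of_real (ln 2) + (1 - s) * of_real (ln 2)"
      by (simp add: algebra_simps)
    thus ?thesis by (simp only:) (simp add: exp_add exp_of_real)
  qed
  finally show ?thesis .
qed

lemma parabolic_mellin_constant:
  fixes K :: nat and c :: real and s :: complex
  assumes K: "K \<ge> 1" and c: "c > 0" and s: "1 - real K < Re s"
  defines "a \<equiv> (real K + 1) / 2" and "w \<equiv> (of_nat K + s - 1) / 2"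
  shows "of_nat K / (2 * of_real (sqrt pi)) * of_real c powr ((1 - s) / 2)
           * (Gamma w * Gamma (of_real a - w) * Gamma (w + 1/2)
               / (of_real (Gamma a) * of_real (Gamma (a + 1/2))))
         = of_real (1 / (2 * sqrt c)) powr (s - 1) * Gamma (1 - s / 2) * Gamma (of_nat K + s - 1)
             / (of_real (sqrt pi) * Gamma (of_nat K))"
proof -
  define C where "C = complex_of_real c powr ((1 - s) / 2)"
  define E where "E = exp ((1 - s) * complex_of_real (ln 2))"
  have Gamma_a: "complex_of_real (Gamma a) = Gamma ((of_nat K + 1) / 2)"
    and Gamma_a': "complex_of_real (Gamma (a + 1/2)) = Gamma ((of_nat K + 1) / 2 + 1/2)"
    by (simp_all add: a_def Gamma_complex_of_real flip: Gamma_complex_of_real)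
  have a_minus_w: "of_real a - w = 1 - s / 2" by (simp add: a_def w_def field_simps)
  have K_nz: "of_nat K \<noteq> (0::complex)" and Gamma_K: "Gamma (of_nat K :: complex) \<noteq> 0"
    using K by (auto intro!: Gamma_nonzero_of_Re_pos)
  have "of_nat K / (2 * of_real (sqrt pi)) * C
           * (Gamma w * Gamma (of_real a - w) * Gamma (w + 1/2)
               / (of_real (Gamma a) * of_real (Gamma (a + 1/2))))
        = of_nat K / (2 * of_real (sqrt pi)) * C * Gamma (1 - s / 2)
           * (Gamma w * Gamma (w + 1/2) / (Gamma ((of_nat K + 1) / 2) * Gamma ((of_nat K + 1) / 2 + 1/2)))"
    unfolding Gamma_a Gamma_a' a_minus_w by (simp add: mult_ac)
  also have "\<dots> = of_nat K / (2 * of_real (sqrt pi)) * C * Gamma (1 - s / 2)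
           * (2 * E * Gamma (of_nat K + s - 1) / (of_nat K * Gamma (of_nat K)))"
    unfolding w_def E_def parabolic_gamma_ratio[OF K s] ..
  also have "\<dots> = (C * E) * Gamma (1 - s / 2) * Gamma (of_nat K + s - 1)
             / (of_real (sqrt pi) * Gamma (of_nat K))"
    using K_nz Gamma_K by (simp add: field_simps)
  also have "C * E = of_real (1 / (2 * sqrt c)) powr (s - 1)"
    unfolding C_def E_def by (rule cpow_half_scaling[OF c])
  finally show ?thesis unfolding C_def .
qed

lemma mellin_parabolic_prior:
  fixes K N :: nat and \<sigma> :: real and s :: complex
  assumes K: "K \<ge> 1" and N: "N \<ge> 1" and \<sigma>: "\<sigma> > 0"
    and s_gt: "1 - real K < Re s" and s_lt: "Re s < 2"
  shows "set_integrable lborel {0<..}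
           (\<lambda>r. complex_of_real (parabolic_prior K N \<sigma> r) * complex_of_real r powr (s - 1))"
    and "(LINT r:{0<..}|lborel. complex_of_real (parabolic_prior K N \<sigma> r) * complex_of_real r powr (s - 1))
           = complex_of_real (\<sigma> / sqrt (2 * real N)) powr (s - 1)
               * Gamma (1 - s / 2) * Gamma (of_nat K + s - 1)
               / (complex_of_real (sqrt pi) * Gamma (of_nat K))" (is "?I = ?V")
proof -
  define c where "c = real N / (2 * \<sigma>^2)"
  define a where "a = (real K + 1) / 2"
  define w where "w = (of_nat K + s - 1) / (2::complex)"
  define D where "D = of_nat K / (2 * of_real (sqrt pi)) * of_real c powr ((1 - s) / 2)"
  define \<Phi> where "\<Phi> = (\<lambda>x. complex_of_real x powr (w - 1) * of_real (tricomiU a (1/2) x))"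
  have c: "c > 0" using N \<sigma> by (simp add: c_def)
  have integrand: "complex_of_real (parabolic_prior K N \<sigma> r) * of_real r powr (s - 1)
                   = D * ((2 * c * r) *\<^sub>R \<Phi> (c * r ^ 2))" if "r \<in> {0<..}" for r
  proof -
    have "real N * r^2 / (2 * \<sigma>^2) = c * r^2" by (simp add: c_def)
    thus ?thesis
      using prior_shape_identity[OF c, of r K "tricomiU a (1/2) (c * r^2)" s] that
      unfolding parabolic_prior_def D_def \<Phi>_def w_def a_def by simp
  qed
  note mellin_U = mellin_tricomiU[of w a "1/2"]
  have U_conds: "Re w > 0" "Re w < a" "Re w > 1/2 - 1"
    using s_gt s_lt by (auto simp: a_def w_def)
  have \<Phi>_int: "set_integrable lborel {0<..} \<Phi>"
    using mellin_U(1)[OF U_conds] unfolding \<Phi>_def .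
  note substitution = set_integral_power_substitution[where n = 2, OF c _ \<Phi>_int, simplified]
  show "set_integrable lborel {0<..}
           (\<lambda>r. complex_of_real (parabolic_prior K N \<sigma> r) * complex_of_real r powr (s - 1))"
    using set_integrable_mult_right[OF substitution(1), of D] integrand
    by (subst set_integrable_cong[OF refl refl]) simp_all
  have "?I = (LINT r:{0<..}|lborel. D * ((2 * c * r) *\<^sub>R \<Phi> (c * r ^ 2)))"
    by (rule set_lebesgue_integral_cong) (use integrand in auto)
  also have "\<dots> = D * (LINT x:{0<..}|lborel. \<Phi> x)"
    unfolding set_integral_mult_right substitution(2) ..
  also have "\<dots> = D * (Gamma w * Gamma (of_real a - w) * Gamma (w + 1/2)
                      / (of_real (Gamma a) * of_real (Gamma (a + 1/2))))"
    using mellin_U(2)[OF U_conds] unfolding \<Phi>_def by (simp add: add_ac)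
  also have "\<dots> = complex_of_real (1 / (2 * sqrt c)) powr (s - 1)
               * Gamma (1 - s / 2) * Gamma (of_nat K + s - 1)
               / (complex_of_real (sqrt pi) * Gamma (of_nat K))"
    unfolding D_def a_def w_def by (rule parabolic_mellin_constant[OF K c s_gt])
  also have "1 / (2 * sqrt c) = \<sigma> / sqrt (2 * real N)"
    using N \<sigma> by (simp add: c_def real_sqrt_divide real_sqrt_mult field_simps)
  finally show "?I = ?V" .
qed

lemma parabolic_prior_nonneg:
  assumes "r > 0"
  shows "parabolic_prior K N \<sigma> r \<ge> 0"
  using assms tricomiU_nonneg[of "(real K + 1) / 2"] by (simp add: parabolic_prior_def)

text \<open>Taking s = 1 shows that the prior has total mass \<Gamma>(1/2)/\<surd>\<pi> = 1.\<close>
lemma parabolic_prior_normalized: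
  fixes K N :: nat and \<sigma> :: real
  assumes K: "K \<ge> 1" and N: "N \<ge> 1" and \<sigma>: "\<sigma> > 0"
  shows "set_integrable lborel {0<..} (parabolic_prior K N \<sigma>)"
    and "(LINT r:{0<..}|lborel. parabolic_prior K N \<sigma> r) = 1"
proof -
  have integrand: "complex_of_real (parabolic_prior K N \<sigma> r) * complex_of_real r powr (1 - 1)
                   = complex_of_real (parabolic_prior K N \<sigma> r)" if "r \<in> {0<..}" for r
    using that by simp
  have in_strip: "1 - real K < Re (1::complex)" "Re (1::complex) < 2"
    using K by simp_all
  note mellin_at_1 = mellin_parabolic_prior[OF K N \<sigma> in_strip]
  have "set_integrable lborel {0<..} (\<lambda>r. complex_of_real (parabolic_prior K N \<sigma> r))"
    using mellin_at_1(1) by (rule set_integrable_cong[THEN iffD1, rotated 3]) (use integrand in auto)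
  thus "set_integrable lborel {0<..} (parabolic_prior K N \<sigma>)"
    by (simp add: set_integrable_complex_of_real_iff)
  have "Gamma (of_nat K :: complex) \<noteq> 0"
    using K by (intro Gamma_nonzero_of_Re_pos) simp
  moreover have "Gamma (1 - 1 / 2 :: complex) = of_real (sqrt pi)"
    using Gamma_one_half_complex by simp
  moreover have "(LINT r:{0<..}|lborel. complex_of_real (parabolic_prior K N \<sigma> r))
        = (LINT r:{0<..}|lborel. complex_of_real (parabolic_prior K N \<sigma> r) * complex_of_real r powr (1 - 1))"
    using integrand by (intro set_lebesgue_integral_cong) auto
  ultimately have "complex_of_real (LINT r:{0<..}|lborel. parabolic_prior K N \<sigma> r) = 1"
    using mellin_at_1(2) N \<sigma> by (simp add: set_integral_complex_of_real)
  thus "(LINT r:{0<..}|lborel. parabolic_prior K N \<sigma> r) = 1"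
    by (simp only: of_real_eq_1_iff)
qed

theorem mainTheorem7:
  fixes K N :: nat and \<sigma> :: real
  assumes "K \<ge> 1" and "N \<ge> 1" and "\<sigma> > 0"
  shows "(\<forall>s::complex. 1 - real K < Re s \<and> Re s < 2 \<longrightarrow>
            set_integrable lborel {0<..}
              (\<lambda>r. complex_of_real (parabolic_prior K N \<sigma> r) * complex_of_real r powr (s - 1)) \<and>
            (LINT r:{0<..}|lborel.
               complex_of_real (parabolic_prior K N \<sigma> r) * complex_of_real r powr (s - 1))
            = complex_of_real (\<sigma> / sqrt (2 * real N)) powr (s - 1)
                * Gamma (1 - s / 2) * Gamma (of_nat K + s - 1)
                / (complex_of_real (sqrt pi) * Gamma (of_nat K)))
         \<and> (\<forall>r>0. parabolic_prior K N \<sigma> r \<ge> 0)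
         \<and> set_integrable lborel {0<..} (parabolic_prior K N \<sigma>)
         \<and> (LINT r:{0<..}|lborel. parabolic_prior K N \<sigma> r) = 1"
  using mellin_parabolic_prior[OF assms] parabolic_prior_nonneg parabolic_prior_normalized[OF assms]
  by blast

end
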